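(* Let $a,b$ be fixed nonzero complex constants, let $\{a_i\},\{b_i\},\{c_i\},\{d_i\}$ ($i\in\mathbb{Z}$) be complex sequences of nonzero numbers, and let $m,n\ge0$ be integers such that for $-n\le j\le m$ the quantities $(1-aa_jc_j)(1-b\frac{a_j}{c_j})$, $(1-aa_jd_j)(1-b\frac{a_j}{d_j})$, $(b_j-c_j)(1-\frac{b}{ab_jc_j})$, $(b_j-d_j)(1-\frac{b}{ab_jd_j})$ are nonzero. Then $$\sum_{k=-n}^{m}(1-aa_kb_k)\Big(1-b\frac{a_k}{b_k}\Big)(c_k-d_k)\Big(1-\frac{b}{ac_kd_k}\Big)\frac{\prod_{j=1}^{k-1}(1-aa_jc_j)(1-b\frac{a_j}{c_j})}{\prod_{j=1}^{k}(1-aa_jd_j)(1-b\frac{a_j}{d_j})}\frac{\prod_{j=1}^{k-1}(b_j-d_j)(1-\frac{b}{ab_jd_j})}{\prod_{j=1}^{k}(b_j-c_j)(1-\frac{b}{ab_jc_j})}$$ $$=\frac{\prod_{j=1}^{m}(1-aa_jc_j)(1-b\frac{a_j}{c_j})}{\prod_{j=1}^{m}(1-aa_jd_j)(1-b\frac{a_j}{d_j})}\frac{\prod_{j=1}^{m}(b_j-d_j)(1-\frac{b}{ab_jd_j})}{\prod_{j=1}^{m}(b_j-c_j)(1-\frac{b}{ab_jc_j})}-\frac{\prod_{j=-n}^{0}(1-aa_jd_j)(1-b\frac{a_j}{d_j})}{\prod_{j=-n}^{0}(1-aa_jc_j)(1-b\frac{a_j}{c_j})}\frac{\prod_{j=-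n}^{0}(b_j-c_j)(1-\frac{b}{ab_jc_j})}{\prod_{j=-n}^{0}(b_j-d_j)(1-\frac{b}{ab_jd_j})}.$$
   Context: Products over integer ranges follow the convention: $\prod_{j=k}^{m}A_j=A_k\cdots A_m$ if $m\ge k$; $=1$ if $m=k-1$; $=(A_{m+1}\cdots A_{k-1})^{-1}$ if $m\le k-2$. The constants $a,b$ are distinct objects from the sequences $a_k,b_k$. *)

theory Defs
  imports "HOL-Analysis.Analysis"
begin

text \<open>Generalized product over an integer range, following the paper's convention:
  gprod A k m = A k * ... * A m if m >= k; = 1 if m = k - 1;
  = inverse (A (m+1) * ... * A (k-1)) if m <= k - 2.\<close>
definition gprod :: "(int \<Rightarrow> complex) \<Rightarrow> int \<Rightarrow> int \<Rightarrow> complex" where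
  "gprod A k m = (if m \<ge> k - 1 then (\<Prod>j\<in>{k..m}. A j)
                  else inverse (\<Prod>j\<in>{m+1..k-1}. A j))"

end

theory Submission
  imports Defs
begin

text \<open>Write \<open>P\<^sub>c k\<close>, \<open>P\<^sub>d k\<close>, \<open>Q\<^sub>c k\<close>, \<open>Q\<^sub>d k\<close> for the four factors
  \<open>(1 - a a\<^sub>k c\<^sub>k)(1 - b a\<^sub>k / c\<^sub>k)\<close>, \<dots>, \<open>(b\<^sub>k - d\<^sub>k)(1 - b / (a b\<^sub>k d\<^sub>k))\<close>.
  An elementary identity shows that the coefficient of the \<open>k\<close>-th summand equals
  \<open>P\<^sub>c k Q\<^sub>d k - P\<^sub>d k Q\<^sub>c k\<close>, so the summand is \<open>F k - F (k - 1)\<close> with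
  \<open>F k = (\<Prod>\<^sub>1\<^sup>k P\<^sub>c / \<Prod>\<^sub>1\<^sup>k P\<^sub>d) (\<Prod>\<^sub>1\<^sup>k Q\<^sub>d / \<Prod>\<^sub>1\<^sup>k Q\<^sub>c)\<close>, and the sum telescopes.
  By the convention for empty and reversed ranges, \<open>F (-n - 1)\<close> is the second term
  of the right-hand side.\<close>

lemma factor_difference_identity:
  fixes a b x y c d :: "'a::field"
  assumes "a \<noteq> 0" "y \<noteq> 0" "c \<noteq> 0" "d \<noteq> 0"
  shows "(1 - a*x*y) * (1 - b*x/y) * (c - d) * (1 - b/(a*c*d)) =
    ((1 - a*x*c) * (1 - b*x/c)) * ((y - d) * (1 - b/(a*y*d)))
    - ((1 - a*x*d) * (1 - b*x/d)) * ((y - c) * (1 - b/(a*y*c)))"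
  using assms by (simp add: field_simps)

(* No hypothesis on y, v: if one of them vanishes, both sides are 0 because x / 0 = 0. *)
lemma ratio_products_step:
  fixes p q r s x y u v :: "'a::field"
  assumes "q \<noteq> 0" "r \<noteq> 0"
  shows "(p * s - q * r) * (x / (y * q)) * (u / (v * r))
    = (x * p / (y * q)) * (u * s / (v * r)) - (x / y) * (u / v)"
  using assms by (cases "y = 0"; cases "v = 0"; simp add: field_simps)

lemma sum_telescope_int:
  fixes f :: "int \<Rightarrow> 'a::ab_group_add"
  assumes "l - 1 \<le> m"
  shows "(\<Sum>k\<in>{l..m}. f k - f (k - 1)) = f m - f (l - 1)"
  using assms
proof (induction m rule: int_ge_induct)
  case base
  then show ?case by simp
next
  case (step i)
  have "{l..i+1} = insert (i+1) {l..i}" using step.hyps by auto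
  then show ?case using step by simp
qed

lemma gprod_1_right:
  assumes "A k \<noteq> 0"
  shows "gprod A 1 k = gprod A 1 (k - 1) * A k"
proof -
  consider "k \<ge> 1" | "k = 0" | "k < 0" by linarith
  then show ?thesis
  proof cases
    case 1
    then have "{1..k} = insert k {1..k-1}" by auto
    with 1 show ?thesis by (simp add: gprod_def mult.commute)
  next
    case 2
    with assms show ?thesis by (simp add: gprod_def)
  next
    case 3
    then have "{k..0} = insert k {k+1..0}" by auto
    with 3 assms show ?thesis by (simp add: gprod_def)
  qed
qed

lemma gprod_1_neg:
  assumes "n \<ge> 0"
  shows "gprod A 1 (-n - 1) = inverse (gprod A (-n) 0)"
  using assms by (simp add: gprod_def)

lemma sum_ratio_products_telescope:
  fixes Pc Pd Qc Qd t :: "int \<Rightarrow> complex" and m n :: int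
  assumes "n \<ge> 0" "-n - 1 \<le> m"
    and nonzero: "\<And>k. -n \<le> k \<Longrightarrow> k \<le> m \<Longrightarrow> Pc k \<noteq> 0 \<and> Pd k \<noteq> 0 \<and> Qc k \<noteq> 0 \<and> Qd k \<noteq> 0"
    and t: "\<And>k. -n \<le> k \<Longrightarrow> k \<le> m \<Longrightarrow> t k = Pc k * Qd k - Pd k * Qc k"
  shows "(\<Sum>k\<in>{-n..m}. t k * (gprod Pc 1 (k - 1) / gprod Pd 1 k)
                              * (gprod Qd 1 (k - 1) / gprod Qc 1 k))
    = (gprod Pc 1 m / gprod Pd 1 m) * (gprod Qd 1 m / gprod Qc 1 m)
      - (gprod Pd (-n) 0 / gprod Pc (-n) 0) * (gprod Qc (-n) 0 / gprod Qd (-n) 0)"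
proof -
  define F where "F k = (gprod Pc 1 k / gprod Pd 1 k) * (gprod Qd 1 k / gprod Qc 1 k)" for k
  have summand: "t k * (gprod Pc 1 (k - 1) / gprod Pd 1 k) * (gprod Qd 1 (k - 1) / gprod Qc 1 k)
      = F k - F (k - 1)" if "k \<in> {-n..m}" for k
  proof -
    from that nonzero have "Pc k \<noteq> 0" "Pd k \<noteq> 0" "Qc k \<noteq> 0" "Qd k \<noteq> 0" by auto
    then have extend:
      "gprod Pc 1 k = gprod Pc 1 (k - 1) * Pc k" "gprod Pd 1 k = gprod Pd 1 (k - 1) * Pd k"
      "gprod Qc 1 k = gprod Qc 1 (k - 1) * Qc k" "gprod Qd 1 k = gprod Qd 1 (k - 1) * Qd k"
      by (simp_all add: gprod_1_right)
    from that t have "t k = Pc k * Qd k - Pd k * Qc k" by simp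
    then show ?thesis
      unfolding F_def extend
      using ratio_products_step[OF \<open>Pd k \<noteq> 0\<close> \<open>Qc k \<noteq> 0\<close>] by simp
  qed
  have "(\<Sum>k\<in>{-n..m}. t k * (gprod Pc 1 (k - 1) / gprod Pd 1 k)
                            * (gprod Qd 1 (k - 1) / gprod Qc 1 k))
      = (\<Sum>k\<in>{-n..m}. F k - F (k - 1))"
    using summand by (rule sum.cong[OF refl])
  also have "\<dots> = F m - F (-n - 1)"
    using sum_telescope_int[of "-n" m F] assms(2) by simp
  also have "F (-n - 1) = (gprod Pd (-n) 0 / gprod Pc (-n) 0) * (gprod Qc (-n) 0 / gprod Qd (-n) 0)"
    unfolding F_def gprod_1_neg[OF assms(1)] by (simp add: divide_inverse)
  finally show ?thesis by (simp add: F_def)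
qed

theorem corollary3p5:
  fixes a b :: complex and as bs cs ds :: "int \<Rightarrow> complex" and m n :: int
  assumes "a \<noteq> 0" "b \<noteq> 0"
    and "\<And>i. as i \<noteq> 0" "\<And>i. bs i \<noteq> 0" "\<And>i. cs i \<noteq> 0" "\<And>i. ds i \<noteq> 0"
    and "m \<ge> 0" "n \<ge> 0"
    and "\<And>j. -n \<le> j \<Longrightarrow> j \<le> m \<Longrightarrow>
           (1 - a * as j * cs j) * (1 - b * as j / cs j) \<noteq> 0"
    and "\<And>j. -n \<le> j \<Longrightarrow> j \<le> m \<Longrightarrow>
           (1 - a * as j * ds j) * (1 - b * as j / ds j) \<noteq> 0"
    and "\<And>j. -n \<le> j \<Longrightarrow> j \<le> m \<Longrightarrow>
           (bs j - cs j) * (1 - b / (a * bs j * cs j)) \<noteq> 0"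
    and "\<And>j. -n \<le> j \<Longrightarrow> j \<le> m \<Longrightarrow>
           (bs j - ds j) * (1 - b / (a * bs j * ds j)) \<noteq> 0"
  shows "(\<Sum>k\<in>{-n..m}.
      (1 - a * as k * bs k) * (1 - b * as k / bs k) * (cs k - ds k) * (1 - b / (a * cs k * ds k))
      * (gprod (\<lambda>j. (1 - a * as j * cs j) * (1 - b * as j / cs j)) 1 (k - 1)
         / gprod (\<lambda>j. (1 - a * as j * ds j) * (1 - b * as j / ds j)) 1 k)
      * (gprod (\<lambda>j. (bs j - ds j) * (1 - b / (a * bs j * ds j))) 1 (k - 1)
         / gprod (\<lambda>j. (bs j - cs j) * (1 - b / (a * bs j * cs j))) 1 k))
    = (gprod (\<lambda>j. (1 - a * as j * cs j) * (1 - b * as j / cs j)) 1 m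
         / gprod (\<lambda>j. (1 - a * as j * ds j) * (1 - b * as j / ds j)) 1 m)
      * (gprod (\<lambda>j. (bs j - ds j) * (1 - b / (a * bs j * ds j))) 1 m
         / gprod (\<lambda>j. (bs j - cs j) * (1 - b / (a * bs j * cs j))) 1 m)
      - (gprod (\<lambda>j. (1 - a * as j * ds j) * (1 - b * as j / ds j)) (-n) 0
         / gprod (\<lambda>j. (1 - a * as j * cs j) * (1 - b * as j / cs j)) (-n) 0)
      * (gprod (\<lambda>j. (bs j - cs j) * (1 - b / (a * bs j * cs j))) (-n) 0
         / gprod (\<lambda>j. (bs j - ds j) * (1 - b / (a * bs j * ds j))) (-n) 0)"
  using assms
  by (intro sum_ratio_products_telescope) (auto intro!: factor_difference_identity)

end
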